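(* Let $W_{32,17}$ be the $32\times 32$ matrix $\begin{pmatrix} A & B\\ -B^T & A^T\end{pmatrix}$, where $A$ and $B$ are $16\times 16$ negacirculant matrices with first rows $r_A=(0,0,1,1,0,0,0,0,1,0,0,0,0,1,1,0)$ and $r_B=(0,1,-1,-1,0,-1,1,0,1,-1,1,1,1,0,-1,1)$ (a skew-symmetric weighing matrix of order $32$ and weight $17$). Let $C_3(W_{32,17})$ be the ternary code of length $64$ with generator matrix $(I\ \ W_{32,17})$, entries read modulo $3$. Then $A_3(C_3(W_{32,17}))$ contains a $7k$-frame and a $23k$-frame for every positive integer $k$.
   Context: An $N\times N$ negacirculant matrix with first row $(r_0,\dots,r_{N-1})$ is the matrix whose $(i,j)$ entry ($0\le i,j\le N-1$) is $r_{j-i}$ if $j\ge i$ and $-r_{N+j-i}$ if $j<i$. A skew-symmetric weighing matrix of order $n$ and weight $w$ is an $n\times n$ $(0,\pm1)$-matrix $W$ with $W^T=-W$ and $WW^T=wI$. Construction A: with $\rho:\mathbb{Z}_k\to\mathbb{Z}$ sending $0,1,\dots,k-1$ to $0,1,\dots,k-1$, for a $\mathbb{Z}_k$-code $C$ of length $N$ set $A_k(C)=\frac{1}{\sqrt{k}}\{\rho(C)+k\mathbb{Z}^N\}$. A $t$-frame of a lattice in dimension $N$ is a set of $N$ lattice vectors $f_1,\dots,f_N$ with $(f_i,f_j)=t\,\delta_{i,j}$. *)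

theory Defs
  imports Complex_Main
begin

text \<open>Matrices are functions nat => nat => int, meaningful on indices below the order.
  Vectors of length N are functions nat => _, meaningful on indices below N
  (lattice vectors are required to vanish outside, for definiteness).\<close>

definition negacirculant :: "nat \<Rightarrow> int list \<Rightarrow> nat \<Rightarrow> nat \<Rightarrow> int" where
  "negacirculant N r i j = (if i \<le> j then r ! (j - i) else - (r ! (N + j - i)))"

definition rA :: "int list" where
  "rA = [0,0,1,1,0,0,0,0,1,0,0,0,0,1,1,0]"

definition rB :: "int list" where
  "rB = [0,1,-1,-1,0,-1,1,0,1,-1,1,1,1,0,-1,1]"

definition matA :: "nat \<Rightarrow> nat \<Rightarrow> int" where "matA = negacirculant 16 rA"
definition matB :: "nat \<Rightarrow> nat \<Rightarrow> int" where "matB = negacirculant 16 rB"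

definition W32 :: "nat \<Rightarrow> nat \<Rightarrow> int" where
  "W32 i j =
     (if i < 16 then (if j < 16 then matA i j else matB i (j - 16))
      else (if j < 16 then - matB j (i - 16) else matA (j - 16) (i - 16)))"

definition gen_IW :: "nat \<Rightarrow> (nat \<Rightarrow> nat \<Rightarrow> int) \<Rightarrow> nat \<Rightarrow> nat \<Rightarrow> int" where
  "gen_IW n W i j = (if j < n then (if i = j then 1 else 0) else W i (j - n))"

text \<open>The Z_k-code of length N generated by the m rows of G (entries read mod k),
  with codewords represented by their representatives in {0,...,k-1}
  (i.e. already composed with rho); zero outside the length.\<close>
definition code_gen :: "int \<Rightarrow> nat \<Rightarrow> nat \<Rightarrow> (nat \<Rightarrow> nat \<Rightarrow> int) \<Rightarrow> (nat \<Rightarrow> int) set" where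
  "code_gen k m N G = {c. \<exists>a :: nat \<Rightarrow> int.
      (\<forall>j<N. c j = (\<Sum>i<m. a i * G i j) mod k) \<and> (\<forall>j\<ge>N. c j = 0)}"

definition C3W :: "(nat \<Rightarrow> int) set" where
  "C3W = code_gen 3 32 64 (gen_IW 32 W32)"

definition constrA :: "int \<Rightarrow> nat \<Rightarrow> (nat \<Rightarrow> int) set \<Rightarrow> (nat \<Rightarrow> real) set" where
  "constrA k N C = {v. \<exists>c\<in>C. \<exists>z :: nat \<Rightarrow> int.
      (\<forall>j<N. v j = real_of_int (c j + k * z j) / sqrt (real_of_int k)) \<and> (\<forall>j\<ge>N. v j = 0)}"

definition inner_N :: "nat \<Rightarrow> (nat \<Rightarrow> real) \<Rightarrow> (nat \<Rightarrow> real) \<Rightarrow> real" where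
  "inner_N N u v = (\<Sum>j<N. u j * v j)"

definition has_frame :: "nat \<Rightarrow> (nat \<Rightarrow> real) set \<Rightarrow> real \<Rightarrow> bool" where
  "has_frame N L t = (\<exists>f :: nat \<Rightarrow> nat \<Rightarrow> real.
      (\<forall>i<N. f i \<in> L) \<and>
      (\<forall>i<N. \<forall>j<N. inner_N N (f i) (f j) = (if i = j then t else 0)))"

end

theory Submission
  imports Defs "HOL-Computational_Algebra.Primes"
begin

text \<open>A skew-symmetric weighing matrix \<open>W\<close> of order \<open>n\<close> and weight \<open>w\<close> yields the integer
  matrix \<open>X = [[pI + qW, rI], [-rI, pI - qW]]\<close>, whose rows are orthogonal of squared norm
  \<open>p\<^sup>2 + wq\<^sup>2 + r\<^sup>2\<close> because \<open>W\<^sup>T = -W\<close> and \<open>WW\<^sup>T = wI\<close>. If \<open>k\<close> divides \<open>p\<close>, \<open>q - r\<close> and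
  \<open>r + wq\<close>, every row of \<open>X\<close> reduces modulo \<open>k\<close> to a codeword of the code generated by
  \<open>(I | W)\<close>, so the rows of \<open>X/\<surd>k\<close> form a frame of \<open>A\<^sub>k\<close>. Multiplying \<open>X\<close> on the left by a
  block diagonal of \<open>4 \<times> 4\<close> quaternion matrices with rows of squared norm \<open>t = a\<^sup>2 + b\<^sup>2 + c\<^sup>2 + d\<^sup>2\<close> scales the
  frame norm by \<open>t\<close>, and by Lagrange's four-square theorem every \<open>t \<ge> 0\<close> occurs. For
  \<open>W32\<close> and \<open>k = 3\<close>, the choices \<open>(p, q, r) = (0, 1, -2)\<close> and \<open>(6, 1, 4)\<close> give the norms
  \<open>21t/3 = 7t\<close> and \<open>69t/3 = 23t\<close>.\<close>

section \<open>Lagrange's four-square theorem\<close>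

definition is_sum4sq :: "int \<Rightarrow> bool" where
  "is_sum4sq n \<longleftrightarrow> (\<exists>a b c d. n = a\<^sup>2 + b\<^sup>2 + c\<^sup>2 + d\<^sup>2)"

lemma euler_four_square_identity:
  fixes x1 x2 x3 x4 y1 y2 y3 y4 :: "'a::comm_ring_1"
  shows "(x1\<^sup>2 + x2\<^sup>2 + x3\<^sup>2 + x4\<^sup>2) * (y1\<^sup>2 + y2\<^sup>2 + y3\<^sup>2 + y4\<^sup>2) =
    (x1*y1 + x2*y2 + x3*y3 + x4*y4)\<^sup>2 + (x1*y2 - x2*y1 + x3*y4 - x4*y3)\<^sup>2 +
    (x1*y3 - x3*y1 + x4*y2 - x2*y4)\<^sup>2 + (x1*y4 - x4*y1 + x2*y3 - x3*y2)\<^sup>2"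
  by (simp add: power2_eq_square algebra_simps)

lemma is_sum4sq_mult: "is_sum4sq a \<Longrightarrow> is_sum4sq b \<Longrightarrow> is_sum4sq (a * b)"
  unfolding is_sum4sq_def using euler_four_square_identity by metis

lemma centered_residue:
  fixes x m :: int
  assumes "0 < m"
  obtains y t where "x = y + m * t" and "(2 * y)\<^sup>2 \<le> m\<^sup>2"
proof -
  define h where "h = m div 2"
  define a where "a = (x + h) mod m"
  have "x = (a - h) + m * ((x + h) div m)"
    unfolding a_def by (simp add: algebra_simps minus_div_mult_eq_mod[symmetric])
  moreover have "0 \<le> a" "a < m" "2 * h \<le> m" "m \<le> 2 * h + 1"
    using assms unfolding a_def h_def by simp_all
  then have "\<bar>2 * (a - h)\<bar> \<le> \<bar>m\<bar>" by (simp add: abs_le_iff)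
  ultimately show thesis using that abs_le_square_iff by blast
qed

text \<open>Euler's identity applied to \<open>x\<^sub>i = y\<^sub>i + m t\<^sub>i\<close> and \<open>y\<^sub>i\<close>: each of the four
  products is divisible by \<open>m\<close>, so the factor \<open>m\<^sup>2\<close> cancels.\<close>
lemma is_sum4sq_cancel:
  fixes m p r y1 y2 y3 y4 t1 t2 t3 t4 :: int
  assumes "m \<noteq> 0"
    and xs: "m * p = (y1 + m*t1)\<^sup>2 + (y2 + m*t2)\<^sup>2 + (y3 + m*t3)\<^sup>2 + (y4 + m*t4)\<^sup>2"
    and ys: "y1\<^sup>2 + y2\<^sup>2 + y3\<^sup>2 + y4\<^sup>2 = m * r"
  shows "is_sum4sq (r * p)"
proof -
  define w1 where "w1 = r + (t1*y1 + t2*y2 + t3*y3 + t4*y4)"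
  define w2 where "w2 = t1*y2 - t2*y1 + t3*y4 - t4*y3"
  define w3 where "w3 = t1*y3 - t3*y1 + t4*y2 - t2*y4"
  define w4 where "w4 = t1*y4 - t4*y1 + t2*y3 - t3*y2"
  have "(y1 + m*t1)*y1 + (y2 + m*t2)*y2 + (y3 + m*t3)*y3 + (y4 + m*t4)*y4
      = (y1\<^sup>2 + y2\<^sup>2 + y3\<^sup>2 + y4\<^sup>2) + m * (t1*y1 + t2*y2 + t3*y3 + t4*y4)"
    by (simp add: power2_eq_square algebra_simps)
  also have "\<dots> = m * w1" unfolding ys w1_def by (simp add: algebra_simps)
  finally have z1: "(y1 + m*t1)*y1 + (y2 + m*t2)*y2 + (y3 + m*t3)*y3 + (y4 + m*t4)*y4 = m * w1" .
  have z2: "(y1 + m*t1)*y2 - (y2 + m*t2)*y1 + (y3 + m*t3)*y4 - (y4 + m*t4)*y3 = m * w2"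
    unfolding w2_def by (simp add: algebra_simps)
  have z3: "(y1 + m*t1)*y3 - (y3 + m*t3)*y1 + (y4 + m*t4)*y2 - (y2 + m*t2)*y4 = m * w3"
    unfolding w3_def by (simp add: algebra_simps)
  have z4: "(y1 + m*t1)*y4 - (y4 + m*t4)*y1 + (y2 + m*t2)*y3 - (y3 + m*t3)*y2 = m * w4"
    unfolding w4_def by (simp add: algebra_simps)
  have "(m * p) * (m * r) = (m*w1)\<^sup>2 + (m*w2)\<^sup>2 + (m*w3)\<^sup>2 + (m*w4)\<^sup>2"
    by (simp only: xs flip: ys) (simp only: euler_four_square_identity z1 z2 z3 z4)
  then have "(m * m) * (r * p) = (m * m) * (w1\<^sup>2 + w2\<^sup>2 + w3\<^sup>2 + w4\<^sup>2)"
    by (simp add: power2_eq_square algebra_simps)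
  then show ?thesis using \<open>m \<noteq> 0\<close> unfolding is_sum4sq_def by auto
qed

lemma four_square_descent_bounds:
  fixes m p r y1 y2 y3 y4 t1 t2 t3 t4 :: int
  assumes m: "1 < m" "\<not> m dvd p"
    and xs: "m * p = (y1 + m*t1)\<^sup>2 + (y2 + m*t2)\<^sup>2 + (y3 + m*t3)\<^sup>2 + (y4 + m*t4)\<^sup>2"
    and ys: "y1\<^sup>2 + y2\<^sup>2 + y3\<^sup>2 + y4\<^sup>2 = m * r"
    and y_bounds: "(2*y1)\<^sup>2 \<le> m\<^sup>2" "(2*y2)\<^sup>2 \<le> m\<^sup>2" "(2*y3)\<^sup>2 \<le> m\<^sup>2" "(2*y4)\<^sup>2 \<le> m\<^sup>2"
  shows "0 < r \<and> r < m"
proof -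
  define s where "s = 2*(y1*t1 + y2*t2 + y3*t3 + y4*t4) + m*(t1\<^sup>2 + t2\<^sup>2 + t3\<^sup>2 + t4\<^sup>2)"
  have "m * p = m * (r + s)"
    unfolding xs s_def distrib_left ys[symmetric] by (simp add: power2_eq_square algebra_simps)
  then have p: "p = r + s" using m by simp
  have "0 \<le> m * r" unfolding ys[symmetric] by simp
  then have "0 \<le> r" using m by (simp add: zero_le_mult_iff)
  moreover have "r \<noteq> 0"
  proof
    assume "r = 0"
    then have "y1 = 0 \<and> y2 = 0 \<and> y3 = 0 \<and> y4 = 0" using ys by (simp add: add_nonneg_eq_0_iff)
    then have "p = m * (t1\<^sup>2 + t2\<^sup>2 + t3\<^sup>2 + t4\<^sup>2)" using p \<open>r = 0\<close> unfolding s_def by simp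
    then show False using m by simp
  qed
  moreover have "4 * (m * r) \<le> 4 * (m * m)"
    using ys y_bounds by (simp add: power2_eq_square)
  then have "r \<le> m" using m by simp
  moreover have "r \<noteq> m"
  proof
    assume "r = m"
    \<comment> \<open>then every \<open>(2 y\<^sub>i)\<^sup>2\<close> attains its bound \<open>m\<^sup>2\<close>, so \<open>m\<close> divides each \<open>2 y\<^sub>i\<close>, hence \<open>s\<close> and \<open>p\<close>\<close>
    then have "(2*y1)\<^sup>2 = m\<^sup>2 \<and> (2*y2)\<^sup>2 = m\<^sup>2 \<and> (2*y3)\<^sup>2 = m\<^sup>2 \<and> (2*y4)\<^sup>2 = m\<^sup>2"
      using ys y_bounds by (simp add: power2_eq_square)
    then have "m dvd 2*y1 \<and> m dvd 2*y2 \<and> m dvd 2*y3 \<and> m dvd 2*y4"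
      unfolding power2_eq_iff by auto
    then have "m dvd (2*y1)*t1 + (2*y2)*t2 + (2*y3)*t3 + (2*y4)*t4"
      by (metis dvd_add dvd_mult2)
    then have "m dvd s" unfolding s_def by (simp add: algebra_simps)
    then show False using m p \<open>r = m\<close> by simp
  qed
  ultimately show ?thesis by simp
qed

lemma is_sum4sq_descent_step:
  fixes m p :: int
  assumes p: "prime p" and m: "1 < m" "m < p" and "is_sum4sq (m * p)"
  obtains r where "0 < r" "r < m" "is_sum4sq (r * p)"
proof -
  obtain x1 x2 x3 x4 where xs: "m * p = x1\<^sup>2 + x2\<^sup>2 + x3\<^sup>2 + x4\<^sup>2"
    using \<open>is_sum4sq (m * p)\<close> unfolding is_sum4sq_def by blast
  have m0: "0 < m" using m by simp
  obtain y1 t1 where 1: "x1 = y1 + m*t1" "(2*y1)\<^sup>2 \<le> m\<^sup>2" by (rule centered_residue[OF m0])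
  obtain y2 t2 where 2: "x2 = y2 + m*t2" "(2*y2)\<^sup>2 \<le> m\<^sup>2" by (rule centered_residue[OF m0])
  obtain y3 t3 where 3: "x3 = y3 + m*t3" "(2*y3)\<^sup>2 \<le> m\<^sup>2" by (rule centered_residue[OF m0])
  obtain y4 t4 where 4: "x4 = y4 + m*t4" "(2*y4)\<^sup>2 \<le> m\<^sup>2" by (rule centered_residue[OF m0])
  have xs': "m * p = (y1 + m*t1)\<^sup>2 + (y2 + m*t2)\<^sup>2 + (y3 + m*t3)\<^sup>2 + (y4 + m*t4)\<^sup>2"
    using xs 1 2 3 4 by simp
  then have "y1\<^sup>2 + y2\<^sup>2 + y3\<^sup>2 + y4\<^sup>2 =
      m * (p - 2*(y1*t1 + y2*t2 + y3*t3 + y4*t4) - m*(t1\<^sup>2 + t2\<^sup>2 + t3\<^sup>2 + t4\<^sup>2))"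
    by (simp add: power2_eq_square algebra_simps)
  then obtain r where ys: "y1\<^sup>2 + y2\<^sup>2 + y3\<^sup>2 + y4\<^sup>2 = m * r" by blast
  have "\<not> m dvd p"
    using m p unfolding prime_int_iff by (metis less_le_not_le order.strict_trans zero_less_one)
  then have "0 < r \<and> r < m"
    using four_square_descent_bounds m(1) xs' ys 1(2) 2(2) 3(2) 4(2) by blast
  moreover have "is_sum4sq (r * p)" using m0 xs' ys by (intro is_sum4sq_cancel) simp_all
  ultimately show thesis using that by blast
qed

lemma is_sum4sq_prime_descent:
  fixes p m :: int
  assumes "prime p" "0 < m" "m < p" "is_sum4sq (m * p)"
  shows "is_sum4sq p"
  using assms(2-)
proof (induction "nat m" arbitrary: m rule: less_induct)
  case less
  show ?case
  proof (cases "m = 1")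
    case True
    then show ?thesis using less.prems by simp
  next
    case False
    then have "1 < m" using less.prems by simp
    then obtain r where "0 < r" "r < m" "is_sum4sq (r * p)"
      using is_sum4sq_descent_step[OF \<open>prime p\<close>] less.prems by blast
    then show ?thesis using less.hyps[of r] less.prems by simp
  qed
qed

lemma dvd_abs_less_imp_eq_0:
  fixes d p :: int
  assumes "p dvd d" "\<bar>d\<bar> < p"
  shows "d = 0"
  using assms dvd_imp_le_int by force

text \<open>The \<open>(p+1)/2\<close> values of \<open>x\<^sup>2\<close> and of \<open>-1 - y\<^sup>2\<close> for \<open>0 \<le> x, y \<le> (p-1)/2\<close> are
  pairwise incongruent modulo \<open>p\<close>, so the two families must meet.\<close>
lemma prime_dvd_sum_squares_plus_one:
  fixes p :: int
  assumes p: "prime p" and "odd p"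
  obtains x y where "0 \<le> x" "2 * x < p" "0 \<le> y" "2 * y < p" "p dvd x\<^sup>2 + y\<^sup>2 + 1"
proof -
  have p1: "1 < p" using p prime_int_iff by blast
  define I where "I = {0..(p - 1) div 2}"
  define f where "f = (\<lambda>x::int. x\<^sup>2 mod p)"
  define g where "g = (\<lambda>x::int. (-1 - x\<^sup>2) mod p)"
  have I_bound: "0 \<le> x \<and> 2 * x < p" if "x \<in> I" for x
    using that \<open>odd p\<close> unfolding I_def by auto
  have square_cong: "x = x'" if "x \<in> I" "x' \<in> I" "p dvd x\<^sup>2 - x'\<^sup>2" for x x'
  proof -
    have "x\<^sup>2 - x'\<^sup>2 = (x - x') * (x + x')" by (simp add: power2_eq_square algebra_simps)
    then have "p dvd x - x' \<or> p dvd x + x'" using that(3) p by (simp add: prime_dvd_mult_iff)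
    moreover have "\<bar>x - x'\<bar> < p" "\<bar>x + x'\<bar> < p"
      using I_bound[OF that(1)] I_bound[OF that(2)] by auto
    ultimately have "x - x' = 0 \<or> x + x' = 0" using dvd_abs_less_imp_eq_0 by blast
    then show ?thesis using I_bound[OF that(1)] I_bound[OF that(2)] by auto
  qed
  have "inj_on f I"
    unfolding inj_on_def f_def using square_cong by (simp add: mod_eq_dvd_iff)
  moreover have "inj_on g I"
  proof (rule inj_onI)
    fix x x' assume "x \<in> I" "x' \<in> I" "g x = g x'"
    then have "p dvd x'\<^sup>2 - x\<^sup>2" unfolding g_def mod_eq_dvd_iff by simp
    then show "x = x'" using square_cong[OF \<open>x' \<in> I\<close> \<open>x \<in> I\<close>] by simp
  qed
  ultimately have "f ` I \<inter> g ` I \<noteq> {}"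
  proof (intro notI)
    assume "inj_on f I" "inj_on g I" and disjoint: "f ` I \<inter> g ` I = {}"
    have "2 * card I = card (f ` I \<union> g ` I)"
      using \<open>inj_on f I\<close> \<open>inj_on g I\<close> disjoint
      by (simp add: card_Un_disjoint card_image I_def)
    also have "\<dots> \<le> card {0..<p}"
      by (rule card_mono) (use p1 in \<open>auto simp: f_def g_def\<close>)
    finally have "int (2 * card I) \<le> p" using p1 by simp
    moreover have "int (card I) = (p - 1) div 2 + 1" unfolding I_def using p1 by simp
    ultimately show False using \<open>odd p\<close> by (auto elim!: oddE)
  qed
  then obtain x y where xy: "x \<in> I" "y \<in> I" "x\<^sup>2 mod p = (-1 - y\<^sup>2) mod p"
    unfolding f_def g_def by auto
  then have "p dvd x\<^sup>2 + y\<^sup>2 + 1" by (simp add: mod_eq_dvd_iff algebra_simps)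
  then show thesis using that I_bound xy(1,2) by blast
qed

lemma is_sum4sq_prime:
  fixes p :: int
  assumes p: "prime p"
  shows "is_sum4sq p"
proof (cases "p = 2")
  case True
  then show ?thesis unfolding is_sum4sq_def by (intro exI[of _ 1] exI[of _ 0]) simp
next
  case False
  then have "odd p" using p prime_ge_2_int prime_odd_int order_le_neq_trans by metis
  have p1: "1 < p" using p prime_int_iff by blast
  obtain x y where xy: "0 \<le> x" "2 * x < p" "0 \<le> y" "2 * y < p" "p dvd x\<^sup>2 + y\<^sup>2 + 1"
    using prime_dvd_sum_squares_plus_one[OF p \<open>odd p\<close>] by blast
  then obtain m where m: "x\<^sup>2 + y\<^sup>2 + 1 = p * m" by (elim dvdE)
  have "0 < p * m" using m[symmetric] by (simp add: add_pos_nonneg)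
  then have "0 < m" using p1 by (simp add: zero_less_mult_iff)
  moreover have "m < p"
  proof -
    have "(2 * x)\<^sup>2 < p\<^sup>2" "(2 * y)\<^sup>2 < p\<^sup>2" using xy by (intro power_strict_mono; simp)+
    then have "4 * (p * m) < 2 * (p * p) + 4"
      unfolding m[symmetric] by (simp add: power_mult_distrib power2_eq_square)
    moreover have "2 * p \<le> p * p" using p1 by (intro mult_right_mono) simp_all
    ultimately show ?thesis using p1 by (smt (verit) mult_less_cancel_left_pos)
  qed
  moreover have "is_sum4sq (m * p)" unfolding is_sum4sq_def
    by (intro exI[of _ x] exI[of _ y] exI[of _ 1] exI[of _ 0]) (simp add: m mult.commute)
  ultimately show ?thesis using is_sum4sq_prime_descent[OF p] by blast
qed

theorem lagrange_four_squares: "is_sum4sq (int n)"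
proof (induction n rule: less_induct)
  case (less n)
  show ?case
  proof (cases "n \<le> 1")
    case True
    then have "int n = (int n)\<^sup>2 + 0\<^sup>2 + 0\<^sup>2 + 0\<^sup>2" by (auto simp: le_Suc_eq)
    then show ?thesis unfolding is_sum4sq_def by blast
  next
    case False
    then obtain p where p: "prime p" "p dvd n" using prime_factor_nat[of n] by auto
    then obtain q where q: "n = p * q" by (elim dvdE)
    have "q < n" using False p(1) q prime_gt_1_nat by (cases "q = 0") auto
    then have "is_sum4sq (int q)" by (rule less.IH)
    moreover have "is_sum4sq (int p)" using p(1) is_sum4sq_prime by simp
    ultimately show ?thesis using q is_sum4sq_mult by simp
  qed
qed

section \<open>Integer matrices with orthogonal rows\<close>

definition row_prod :: "nat \<Rightarrow> (nat \<Rightarrow> nat \<Rightarrow> int) \<Rightarrow> (nat \<Rightarrow> nat \<Rightarrow> int) \<Rightarrow> nat \<Rightarrow> nat \<Rightarrow> int" where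
  "row_prod N X Y i j = (\<Sum>l<N. X i l * Y j l)"

definition kron_delta :: "nat \<Rightarrow> nat \<Rightarrow> int" where
  "kron_delta i j = (if i = j then 1 else 0)"

lemma kron_delta_sym: "kron_delta i j = kron_delta j i"
  unfolding kron_delta_def by simp

lemma sum_kron_delta:
  assumes "a < n"
  shows "(\<Sum>l<n. kron_delta a l * f l) = f a"
    and "(\<Sum>l<n. f l * kron_delta a l) = f a"
  using assms unfolding kron_delta_def
  by (simp_all add: if_distrib[of "\<lambda>x. x * _"] if_distrib[of "\<lambda>x. _ * x"] cong: if_cong)

definition mat_mult :: "nat \<Rightarrow> (nat \<Rightarrow> nat \<Rightarrow> int) \<Rightarrow> (nat \<Rightarrow> nat \<Rightarrow> int) \<Rightarrow> nat \<Rightarrow> nat \<Rightarrow> int" where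
  "mat_mult N M X = (\<lambda>i l. \<Sum>j<N. M i j * X j l)"

lemma row_prod_mat_mult:
  assumes X: "\<And>i j. i < N \<Longrightarrow> j < N \<Longrightarrow> row_prod N X X i j = s * kron_delta i j"
    and M: "\<And>i j. i < N \<Longrightarrow> j < N \<Longrightarrow> row_prod N M M i j = t * kron_delta i j"
    and "i < N" "i' < N"
  shows "row_prod N (mat_mult N M X) (mat_mult N M X) i i' = t * s * kron_delta i i'"
proof -
  have "row_prod N (mat_mult N M X) (mat_mult N M X) i i' =
      (\<Sum>l<N. \<Sum>j<N. \<Sum>j'<N. M i j * M i' j' * (X j l * X j' l))"
    unfolding row_prod_def mat_mult_def by (simp add: sum_product mult_ac)
  also have "\<dots> = (\<Sum>j<N. \<Sum>j'<N. \<Sum>l<N. M i j * M i' j' * (X j l * X j' l))"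
    by (subst sum.swap) (rule sum.cong[OF refl], rule sum.swap)
  also have "\<dots> = (\<Sum>j<N. \<Sum>j'<N. kron_delta j j' * (M i j * M i' j' * s))"
    by (intro sum.cong refl) (simp add: X mult_ac flip: sum_distrib_left row_prod_def)
  also have "\<dots> = (\<Sum>j<N. M i j * M i' j * s)"
    by (intro sum.cong refl) (simp add: sum_kron_delta)
  also have "\<dots> = t * s * kron_delta i i'"
    using M[OF \<open>i < N\<close> \<open>i' < N\<close>] unfolding row_prod_def
    by (simp add: sum_distrib_left[symmetric] mult_ac)
  finally show ?thesis .
qed

lemma sum_lessThan_add: "(\<Sum>l<n + m. f l) = (\<Sum>l<n. f l) + (\<Sum>l<m. f (n + l))"
  for f :: "nat \<Rightarrow> 'a::comm_monoid_add"
  by (induction m) (simp_all add: add.assoc)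

definition block2 ::
  "nat \<Rightarrow> (nat \<Rightarrow> nat \<Rightarrow> int) \<Rightarrow> (nat \<Rightarrow> nat \<Rightarrow> int) \<Rightarrow> (nat \<Rightarrow> nat \<Rightarrow> int) \<Rightarrow>
    (nat \<Rightarrow> nat \<Rightarrow> int) \<Rightarrow> nat \<Rightarrow> nat \<Rightarrow> int" where
  "block2 n A B C D i l =
     (if i < 2 * n \<and> l < 2 * n then
        if i < n then (if l < n then A i l else B i (l - n))
        else (if l < n then C (i - n) l else D (i - n) (l - n))
      else 0)"

lemma block2_quadrants:
  assumes "i < n" "l < n"
  shows "block2 n A B C D i l = A i l"
    and "block2 n A B C D i (n + l) = B i l"
    and "block2 n A B C D (n + i) l = C i l"
    and "block2 n A B C D (n + i) (n + l) = D i l"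
  using assms by (simp_all add: block2_def)

lemma row_prod_block2:
  fixes n :: nat and A B C D A' B' C' D' :: "nat \<Rightarrow> nat \<Rightarrow> int"
  defines "X \<equiv> block2 n A B C D" and "X' \<equiv> block2 n A' B' C' D'"
  assumes "a < n" "b < n"
  shows "row_prod (2 * n) X X' a b = row_prod n A A' a b + row_prod n B B' a b"
    and "row_prod (2 * n) X X' a (n + b) = row_prod n A C' a b + row_prod n B D' a b"
    and "row_prod (2 * n) X X' (n + a) b = row_prod n C A' a b + row_prod n D B' a b"
    and "row_prod (2 * n) X X' (n + a) (n + b) = row_prod n C C' a b + row_prod n D D' a b"
proof -
  have split: "row_prod (2 * n) Y Y' i j =
      (\<Sum>l<n. Y i l * Y' j l) + (\<Sum>l<n. Y i (n + l) * Y' j (n + l))" for Y Y' i j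
    unfolding row_prod_def mult_2 by (rule sum_lessThan_add)
  from assms(3,4) show
    "row_prod (2 * n) X X' a b = row_prod n A A' a b + row_prod n B B' a b"
    "row_prod (2 * n) X X' a (n + b) = row_prod n A C' a b + row_prod n B D' a b"
    "row_prod (2 * n) X X' (n + a) b = row_prod n C A' a b + row_prod n D B' a b"
    "row_prod (2 * n) X X' (n + a) (n + b) = row_prod n C C' a b + row_prod n D D' a b"
    unfolding split unfolding row_prod_def X_def X'_def
    by (simp_all add: block2_quadrants)
qed

lemma less_double_cases:
  fixes i n :: nat
  assumes "i < 2 * n"
  obtains (low) "i < n" | (high) a where "i = n + a" "a < n"
  using assms by (metis add_diff_inverse_nat mult_2 nat_add_left_cancel_less)

lemma sum_lessThan_mult: "(\<Sum>l<k * m. f l) = (\<Sum>b<m. \<Sum>u<k. f (k * b + u))"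
  for f :: "nat \<Rightarrow> 'a::comm_monoid_add"
proof (induction m)
  case (Suc m)
  have "(\<Sum>l<k * Suc m. f l) = (\<Sum>l<k * m + k. f l)" by (simp add: add.commute)
  then show ?case using Suc by (simp only: sum_lessThan_add sum.lessThan_Suc)
qed simp

text \<open>Row \<open>e\<close> is the quaternion product \<open>e (a + bi + cj + dk)\<close> for \<open>e = 1, i, j, k\<close>.\<close>
definition quaternion_mat :: "int \<Rightarrow> int \<Rightarrow> int \<Rightarrow> int \<Rightarrow> nat \<Rightarrow> nat \<Rightarrow> int" where
  "quaternion_mat a b c d u v = [[a, b, c, d], [-b, a, -d, c], [-c, d, a, -b], [-d, -c, b, a]] ! u ! v"

lemma row_prod_quaternion_mat:
  assumes "u < 4" "v < 4"
  shows "row_prod 4 (quaternion_mat a b c d) (quaternion_mat a b c d) u v =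
    (a\<^sup>2 + b\<^sup>2 + c\<^sup>2 + d\<^sup>2) * kron_delta u v"
proof -
  let ?Q = "quaternion_mat a b c d"
  have "row_prod 4 ?Q ?Q u v = ?Q u 0 * ?Q v 0 + ?Q u 1 * ?Q v 1 + ?Q u 2 * ?Q v 2 + ?Q u 3 * ?Q v 3"
    by (simp add: row_prod_def eval_nat_numeral)
  moreover have "u = 0 \<or> u = 1 \<or> u = 2 \<or> u = 3" "v = 0 \<or> v = 1 \<or> v = 2 \<or> v = 3"
    using assms by auto
  ultimately show ?thesis
    unfolding quaternion_mat_def kron_delta_def
    by (elim disjE) (simp_all add: power2_eq_square algebra_simps)
qed

definition quaternion_diag :: "int \<Rightarrow> int \<Rightarrow> int \<Rightarrow> int \<Rightarrow> nat \<Rightarrow> nat \<Rightarrow> int" where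
  "quaternion_diag a b c d i l =
     kron_delta (i div 4) (l div 4) * quaternion_mat a b c d (i mod 4) (l mod 4)"

lemma row_prod_quaternion_diag:
  assumes "i < 4 * m" "j < 4 * m"
  shows "row_prod (4 * m) (quaternion_diag a b c d) (quaternion_diag a b c d) i j =
    (a\<^sup>2 + b\<^sup>2 + c\<^sup>2 + d\<^sup>2) * kron_delta i j"
proof -
  let ?Q = "quaternion_mat a b c d"
  have "row_prod (4 * m) (quaternion_diag a b c d) (quaternion_diag a b c d) i j =
      (\<Sum>B<m. kron_delta (i div 4) B * (kron_delta (j div 4) B * row_prod 4 ?Q ?Q (i mod 4) (j mod 4)))"
    unfolding row_prod_def sum_lessThan_mult quaternion_diag_def
    by (intro sum.cong refl) (simp add: sum_distrib_left mult_ac)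
  also have "\<dots> = kron_delta (j div 4) (i div 4) * row_prod 4 ?Q ?Q (i mod 4) (j mod 4)"
    using assms by (simp add: sum_kron_delta less_mult_imp_div_less)
  also have "\<dots> = (a\<^sup>2 + b\<^sup>2 + c\<^sup>2 + d\<^sup>2) * kron_delta i j"
  proof -
    have "i = j \<longleftrightarrow> i div 4 = j div 4 \<and> i mod 4 = j mod 4" by (metis div_mult_mod_eq)
    then show ?thesis by (auto simp: row_prod_quaternion_mat kron_delta_def)
  qed
  finally show ?thesis .
qed

section \<open>Skew-symmetric weighing matrices\<close>

definition skew_weighing :: "nat \<Rightarrow> int \<Rightarrow> (nat \<Rightarrow> nat \<Rightarrow> int) \<Rightarrow> bool" where
  "skew_weighing n w W \<longleftrightarrow>
     (\<forall>i<n. \<forall>j<n. W j i = - W i j \<and> row_prod n W W i j = w * kron_delta i j)"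

lemma skew_weighingD:
  assumes "skew_weighing n w W" "a < n" "b < n"
  shows "W b a = - W a b" and "row_prod n W W a b = w * kron_delta a b"
  using assms unfolding skew_weighing_def by blast+

lemma skew_weighing_W32: "skew_weighing 32 17 W32"
proof -
  have table: "\<forall>i\<in>set [0..<32]. \<forall>j\<in>set [0..<32].
      W32 j i = - W32 i j \<and> (\<Sum>l\<leftarrow>[0..<32]. W32 i l * W32 j l) = 17 * kron_delta i j"
    by code_simp
  have sum_list_conv: "(\<Sum>l<N. f l) = (\<Sum>l\<leftarrow>[0..<N]. f l)" for N and f :: "nat \<Rightarrow> int"
    by (simp add: interv_sum_list_conv_sum_set_nat atLeast0LessThan)
  have "W32 j i = - W32 i j \<and> row_prod 32 W32 W32 i j = 17 * kron_delta i j"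
    if "i < 32" "j < 32" for i j
  proof -
    have "i \<in> set [0..<32]" "j \<in> set [0..<32]"
      using that by (simp_all only: set_upt atLeastLessThan_iff) simp_all
    then show ?thesis using table unfolding row_prod_def sum_list_conv by blast
  qed
  then show ?thesis unfolding skew_weighing_def by blast
qed

definition lin_IW :: "(nat \<Rightarrow> nat \<Rightarrow> int) \<Rightarrow> int \<Rightarrow> int \<Rightarrow> nat \<Rightarrow> nat \<Rightarrow> int" where
  "lin_IW W \<alpha> \<beta> i l = \<alpha> * kron_delta i l + \<beta> * W i l"

lemma row_prod_lin_IW:
  assumes "skew_weighing n w W" "a < n" "b < n"
  shows "row_prod n (lin_IW W \<alpha> \<beta>) (lin_IW W \<gamma> \<epsilon>) a b =
    (\<alpha> * \<gamma> + \<beta> * \<epsilon> * w) * kron_delta a b + (\<beta> * \<gamma> - \<alpha> * \<epsilon>) * W a b"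
proof -
  have expand: "lin_IW W \<alpha> \<beta> a l * lin_IW W \<gamma> \<epsilon> b l =
      \<alpha> * \<gamma> * (kron_delta a l * kron_delta b l) + \<alpha> * \<epsilon> * (kron_delta a l * W b l)
      + \<beta> * \<gamma> * (W a l * kron_delta b l) + \<beta> * \<epsilon> * (W a l * W b l)" for l
    unfolding lin_IW_def by (simp add: algebra_simps)
  have "row_prod n (lin_IW W \<alpha> \<beta>) (lin_IW W \<gamma> \<epsilon>) a b =
      \<alpha> * \<gamma> * (\<Sum>l<n. kron_delta a l * kron_delta b l) + \<alpha> * \<epsilon> * (\<Sum>l<n. kron_delta a l * W b l)
      + \<beta> * \<gamma> * (\<Sum>l<n. W a l * kron_delta b l) + \<beta> * \<epsilon> * row_prod n W W a b"
    unfolding row_prod_def expand by (simp only: sum.distrib sum_distrib_left)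
  also have "\<dots> = \<alpha> * \<gamma> * kron_delta a b - \<alpha> * \<epsilon> * W a b + \<beta> * \<gamma> * W a b
      + \<beta> * \<epsilon> * (w * kron_delta a b)"
    using assms(2,3) by (simp add: sum_kron_delta kron_delta_sym[of b a] skew_weighingD[OF assms])
  finally show ?thesis by (simp add: algebra_simps)
qed

lemma lin_IW_mult_W:
  assumes W: "skew_weighing n w W" and "a < n" "l < n"
  shows "(\<Sum>i<n. lin_IW W \<alpha> \<beta> a i * W i l) = \<alpha> * W a l - \<beta> * w * kron_delta a l"
proof -
  have "(\<Sum>i<n. lin_IW W \<alpha> \<beta> a i * W i l) = row_prod n (lin_IW W \<alpha> \<beta>) (lin_IW W 0 (- 1)) a l"
    unfolding row_prod_def
    by (intro sum.cong) (simp_all add: lin_IW_def kron_delta_def skew_weighingD(1)[OF W _ \<open>l < n\<close>])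
  also have "\<dots> = \<alpha> * W a l - \<beta> * w * kron_delta a l"
    using assms by (simp add: row_prod_lin_IW)
  finally show ?thesis .
qed

definition skew_block ::
  "nat \<Rightarrow> (nat \<Rightarrow> nat \<Rightarrow> int) \<Rightarrow> int \<Rightarrow> int \<Rightarrow> int \<Rightarrow> nat \<Rightarrow> nat \<Rightarrow> int" where
  "skew_block n W p q r =
     block2 n (lin_IW W p q) (lin_IW W r 0) (lin_IW W (- r) 0) (lin_IW W p (- q))"

lemma row_prod_skew_block:
  assumes W: "skew_weighing n w W" and "i < 2 * n" "j < 2 * n"
  shows "row_prod (2 * n) (skew_block n W p q r) (skew_block n W p q r) i j =
    (p\<^sup>2 + w * q\<^sup>2 + r\<^sup>2) * kron_delta i j"
  using assms(2,3) unfolding skew_block_def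
  by (cases rule: less_double_cases[case_product less_double_cases])
    (simp_all add: row_prod_block2 row_prod_lin_IW[OF W],
     simp_all add: kron_delta_def power2_eq_square algebra_simps)

section \<open>Construction A lattices and their frames\<close>

text \<open>Integer vectors whose residues modulo \<open>k\<close> form a codeword of the code generated by
  \<open>(I | W)\<close>: scaled by \<open>1/\<surd>k\<close> they are the vectors of Construction A.\<close>
definition code_lattice :: "int \<Rightarrow> nat \<Rightarrow> (nat \<Rightarrow> nat \<Rightarrow> int) \<Rightarrow> (nat \<Rightarrow> int) set" where
  "code_lattice k n W =
     {x. (\<forall>l\<ge>2 * n. x l = 0) \<and> (\<forall>l<n. k dvd x (n + l) - (\<Sum>i<n. x i * W i l))}"

lemma code_lattice_scaled_in_constrA:
  assumes x: "x \<in> code_lattice k n W"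
  shows "(\<lambda>l. real_of_int (x l) / sqrt (real_of_int k))
    \<in> constrA k (2 * n) (code_gen k n (2 * n) (gen_IW n W))"
proof -
  define c where "c l = (if l < 2 * n then x l mod k else 0)" for l
  have "c \<in> code_gen k n (2 * n) (gen_IW n W)"
    unfolding code_gen_def mem_Collect_eq
  proof (intro exI[of _ x] conjI allI impI)
    fix j assume "j < 2 * n"
    then show "c j = (\<Sum>i<n. x i * gen_IW n W i j) mod k"
    proof (cases rule: less_double_cases)
      case low
      then have "(\<Sum>i<n. x i * gen_IW n W i j) = (\<Sum>i<n. x i * kron_delta j i)"
        by (intro sum.cong) (auto simp: gen_IW_def kron_delta_def)
      with low show ?thesis by (simp add: c_def sum_kron_delta)
    next
      case (high l)
      then have "(\<Sum>i<n. x i * gen_IW n W i j) = (\<Sum>i<n. x i * W i l)"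
        by (intro sum.cong) (auto simp: gen_IW_def)
      with high x show ?thesis by (simp add: c_def code_lattice_def mod_eq_dvd_iff)
    qed
  qed (simp add: c_def)
  then show ?thesis
    unfolding constrA_def mem_Collect_eq
  proof (intro bexI[of _ c] exI[of _ "\<lambda>l. x l div k"] conjI allI impI)
    fix j assume "j < 2 * n"
    then show "real_of_int (x j) / sqrt (real_of_int k) =
        real_of_int (c j + k * (x j div k)) / sqrt (real_of_int k)"
      by (simp add: c_def)
  next
    fix j assume "2 * n \<le> j"
    then show "real_of_int (x j) / sqrt (real_of_int k) = 0"
      using x by (simp add: code_lattice_def)
  qed
qed

lemma code_lattice_lincomb:
  assumes "\<And>j. j < m \<Longrightarrow> X j \<in> code_lattice k n W"
  shows "(\<lambda>l. \<Sum>j<m. M j * X j l) \<in> code_lattice k n W"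
  unfolding code_lattice_def mem_Collect_eq
proof (intro conjI allI impI)
  fix l assume "2 * n \<le> l"
  then show "(\<Sum>j<m. M j * X j l) = 0" using assms by (simp add: code_lattice_def)
next
  fix l assume "l < n"
  have "(\<Sum>j<m. M j * X j (n + l)) - (\<Sum>i<n. (\<Sum>j<m. M j * X j i) * W i l) =
      (\<Sum>j<m. M j * (X j (n + l) - (\<Sum>i<n. X j i * W i l)))"
    by (simp add: sum_subtractf right_diff_distrib sum_distrib_left sum_distrib_right
        sum.swap[of _ "{..<n}"] mult.assoc)
  also have "k dvd \<dots>"
    using assms \<open>l < n\<close> by (intro dvd_sum dvd_mult) (simp add: code_lattice_def)
  finally show "k dvd (\<Sum>j<m. M j * X j (n + l)) - (\<Sum>i<n. (\<Sum>j<m. M j * X j i) * W i l)" .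
qed

lemma skew_block_in_code_lattice:
  assumes W: "skew_weighing n w W"
    and k: "k dvd p" "k dvd q - r" "k dvd r + w * q" and "i < 2 * n"
  shows "skew_block n W p q r i \<in> code_lattice k n W"
  unfolding code_lattice_def mem_Collect_eq
proof (intro conjI allI impI)
  fix l assume "2 * n \<le> l"
  then show "skew_block n W p q r i l = 0" by (simp add: skew_block_def block2_def)
next
  fix l assume "l < n"
  from \<open>i < 2 * n\<close>
  show "k dvd skew_block n W p q r i (n + l) - (\<Sum>i'<n. skew_block n W p q r i i' * W i' l)"
  proof (cases rule: less_double_cases)
    case low
    have "skew_block n W p q r i (n + l) = r * kron_delta i l"
      using low \<open>l < n\<close> by (simp add: skew_block_def block2_quadrants lin_IW_def)
    moreover have "(\<Sum>i'<n. skew_block n W p q r i i' * W i' l) = (\<Sum>i'<n. lin_IW W p q i i' * W i' l)"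
      using low by (intro sum.cong) (simp_all add: skew_block_def block2_quadrants)
    moreover have "\<dots> = p * W i l - q * w * kron_delta i l"
      using W low \<open>l < n\<close> by (rule lin_IW_mult_W)
    ultimately have "skew_block n W p q r i (n + l) - (\<Sum>i'<n. skew_block n W p q r i i' * W i' l) =
        (r + w * q) * kron_delta i l - p * W i l"
      by (simp add: algebra_simps)
    then show ?thesis using k by simp
  next
    case (high a)
    have "skew_block n W p q r i (n + l) = p * kron_delta a l - q * W a l"
      using high \<open>l < n\<close> by (simp add: skew_block_def block2_quadrants lin_IW_def)
    moreover have "(\<Sum>i'<n. skew_block n W p q r i i' * W i' l) = (\<Sum>i'<n. lin_IW W (- r) 0 a i' * W i' l)"
      using high by (intro sum.cong) (simp_all add: skew_block_def block2_quadrants)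
    moreover have "\<dots> = - r * W a l"
      using W high(2) \<open>l < n\<close> by (simp add: lin_IW_mult_W)
    ultimately have "skew_block n W p q r i (n + l) - (\<Sum>i'<n. skew_block n W p q r i i' * W i' l) =
        p * kron_delta a l - (q - r) * W a l"
      by (simp add: algebra_simps)
    then show ?thesis using k by simp
  qed
qed

lemma has_frame_code_lattice:
  assumes "0 < k"
    and rows: "\<And>i. i < 2 * n \<Longrightarrow> Y i \<in> code_lattice k n W"
    and gram: "\<And>i j. i < 2 * n \<Longrightarrow> j < 2 * n \<Longrightarrow> row_prod (2 * n) Y Y i j = c * kron_delta i j"
  shows "has_frame (2 * n) (constrA k (2 * n) (code_gen k n (2 * n) (gen_IW n W)))
    (real_of_int c / real_of_int k)"
  unfolding has_frame_def
proof (intro exI[of _ "\<lambda>i l. real_of_int (Y i l) / sqrt (real_of_int k)"] conjI allI impI)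
  fix i assume "i < 2 * n"
  then show "(\<lambda>l. real_of_int (Y i l) / sqrt (real_of_int k))
      \<in> constrA k (2 * n) (code_gen k n (2 * n) (gen_IW n W))"
    by (intro code_lattice_scaled_in_constrA rows)
next
  fix i j assume ij: "i < 2 * n" "j < 2 * n"
  have "inner_N (2 * n) (\<lambda>l. real_of_int (Y i l) / sqrt (real_of_int k))
      (\<lambda>l. real_of_int (Y j l) / sqrt (real_of_int k)) = real_of_int (row_prod (2 * n) Y Y i j) / k"
    unfolding inner_N_def row_prod_def using \<open>0 < k\<close>
    by (simp add: sum_divide_distrib)
  then show "inner_N (2 * n) (\<lambda>l. real_of_int (Y i l) / sqrt (real_of_int k))
      (\<lambda>l. real_of_int (Y j l) / sqrt (real_of_int k)) =
      (if i = j then real_of_int c / real_of_int k else 0)"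
    using gram[OF ij] by (simp add: kron_delta_def)
qed

theorem has_frame_skew_weighing:
  fixes t :: nat
  assumes W: "skew_weighing n w W" and "even n" and "0 < k"
    and k: "k dvd p" "k dvd q - r" "k dvd r + w * q"
  shows "has_frame (2 * n) (constrA k (2 * n) (code_gen k n (2 * n) (gen_IW n W)))
    (real_of_int (int t * (p\<^sup>2 + w * q\<^sup>2 + r\<^sup>2)) / real_of_int k)"
proof -
  obtain a b c d where t: "int t = a\<^sup>2 + b\<^sup>2 + c\<^sup>2 + d\<^sup>2"
    using lagrange_four_squares unfolding is_sum4sq_def by blast
  obtain m where m: "2 * n = 4 * m" using \<open>even n\<close> by (auto elim!: evenE)
  define Y where "Y = mat_mult (2 * n) (quaternion_diag a b c d) (skew_block n W p q r)"
  have "Y i \<in> code_lattice k n W" if "i < 2 * n" for i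
    unfolding Y_def mat_mult_def by (intro code_lattice_lincomb skew_block_in_code_lattice[OF W k])
  moreover have "row_prod (2 * n) Y Y i j = int t * (p\<^sup>2 + w * q\<^sup>2 + r\<^sup>2) * kron_delta i j"
    if "i < 2 * n" "j < 2 * n" for i j
    unfolding Y_def using that
    by (intro row_prod_mat_mult row_prod_skew_block[OF W]) (simp_all add: m t row_prod_quaternion_diag)
  ultimately show ?thesis using \<open>0 < k\<close> by (intro has_frame_code_lattice) auto
qed

theorem lemma7p2:
  fixes k :: nat
  assumes "k > 0"
  shows "has_frame 64 (constrA 3 64 C3W) (real (7 * k)) \<and>
         has_frame 64 (constrA 3 64 C3W) (real (23 * k))"
proof -
  have "has_frame (2 * 32) (constrA 3 (2 * 32) (code_gen 3 32 (2 * 32) (gen_IW 32 W32)))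
      (real_of_int (int k * (0\<^sup>2 + 17 * 1\<^sup>2 + (-2)\<^sup>2)) / real_of_int 3)"
    by (rule has_frame_skew_weighing[OF skew_weighing_W32]) simp_all
  moreover have "has_frame (2 * 32) (constrA 3 (2 * 32) (code_gen 3 32 (2 * 32) (gen_IW 32 W32)))
      (real_of_int (int k * (6\<^sup>2 + 17 * 1\<^sup>2 + 4\<^sup>2)) / real_of_int 3)"
    by (rule has_frame_skew_weighing[OF skew_weighing_W32]) simp_all
  ultimately show ?thesis by (simp add: C3W_def)
qed

end
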